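(* Let $X\sim\mathrm{ECR}(\beta,\lambda)$. Then $$\mathbb E(\log X)=\log\lambda+\tfrac12\,\Phi\!\left(\tfrac12;1,\beta\right)+\psi(1+\beta)+\gamma-\frac1\beta.$$
   Context: The exponentiated Cauchy–Rayleigh distribution $\mathrm{ECR}(\beta,\lambda)$, with shape parameter $\beta>0$ and scale parameter $\lambda>0$, is the distribution on $(0,\infty)$ with cdf $F(x)=\left(1-\frac{\lambda}{\sqrt{\lambda^2+x^2}}\right)^{\beta}$ for $x>0$. $\Phi(z;s,a)=\sum_{n=0}^\infty \frac{z^n}{(n+a)^s}$ is the Lerch transcendent, $\psi=\Gamma'/\Gamma$ is the digamma function, and $\gamma=0.57721\ldots$ is the Euler–Mascheroni constant. *)

theory Defs
  imports "HOL-Probability.Probability"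
begin

text \<open>CDF of the exponentiated Cauchy-Rayleigh distribution ECR(beta, lambda), for x > 0.\<close>
definition ecr_cdf :: "real \<Rightarrow> real \<Rightarrow> real \<Rightarrow> real" where
  "ecr_cdf \<beta> l x = (1 - l / sqrt (l\<^sup>2 + x\<^sup>2)) powr \<beta>"

definition lerch_phi :: "real \<Rightarrow> real \<Rightarrow> real \<Rightarrow> real" where
  "lerch_phi z s a = (\<Sum>n. z ^ n / (real n + a) powr s)"

end

theory Submission
  imports Defs
begin

text \<open>
  The quantile function of \<open>ECR(\<beta>, \<lambda>)\<close> is explicit: solving \<open>F(x) = v\<close> gives
  \<open>Q(v) = \<lambda> \<surd>(w (2 - w)) / (1 - w)\<close> with \<open>w = v\<^bsup>1/\<beta>\<^esup>\<close>, so \<open>X\<close> has the law of \<open>Q(U)\<close> for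
  \<open>U\<close> uniform on \<open>(0,1)\<close>. Taking logarithms,
  \<open>ln Q(v) = ln \<lambda> + ln v / (2\<beta>) + ln 2 / 2 + ln (1 - w/2) / 2 - ln (1 - w)\<close>.
  Expanding \<open>-ln (1 - c w) = \<Sum> c\<^sup>n w\<^sup>n / n\<close> and integrating termwise (monotone convergence)
  gives \<open>\<integral>\<^sub>0\<^sup>1 -ln (1 - c v\<^bsup>1/\<beta>\<^esup>) dv = \<Sum> c\<^sup>n \<beta> / (n (n + \<beta>))\<close>; for \<open>c = 1\<close> this series is
  \<open>\<psi>(1 + \<beta>) + \<gamma>\<close>, and for \<open>c = 1/2\<close> it is \<open>ln 2 - \<Phi>(1/2; 1, \<beta>) + 1/\<beta>\<close> by partial fractions.
\<close>

lemma has_bochner_integral_quantile_transform: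
  fixes M :: "'a measure" and X :: "'a \<Rightarrow> real" and Q f :: "real \<Rightarrow> real"
  assumes "prob_space M" and [measurable]: "X \<in> borel_measurable M"
    and Q_measurable [measurable]: "Q \<in> borel_measurable borel"
    and f_measurable [measurable]: "f \<in> borel_measurable borel"
    and cdf: "\<And>x. measure M {\<omega> \<in> space M. X \<omega> \<le> x} = measure lborel ({0<..<1} \<inter> Q -` {..x})"
    and integral: "has_bochner_integral lborel (\<lambda>v. indicator {0<..<1} v * f (Q v)) I"
  shows "has_bochner_integral M (\<lambda>\<omega>. f (X \<omega>)) I"
proof -
  define U where "U = uniform_measure lborel {0<..<1::real}"
  have U_density: "U = density lborel (\<lambda>v. ennreal (indicator {0<..<1} v))"
    unfolding U_def uniform_measure_def by (intro density_cong) (auto simp: indicator_def)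
  have U_sets [measurable_cong]: "sets U = sets borel"
    by (simp add: U_def)
  have "distr M borel X = distr U borel Q"
  proof (rule cdf_unique)
    show "real_distribution (distr M borel X)"
      using \<open>prob_space M\<close> by (intro prob_space.real_distribution_distr) auto
    show "real_distribution (distr U borel Q)"
      unfolding U_def by (intro prob_space.real_distribution_distr prob_space_uniform_measure) auto
    show "cdf (distr M borel X) = cdf (distr U borel Q)"
    proof
      fix x :: real
      have "Q -` {..x} \<in> sets borel"
        using measurable_sets_borel[of Q borel "{..x}"] by auto
      then have "cdf (distr U borel Q) x = measure lborel ({0<..<1} \<inter> Q -` {..x})"
        unfolding cdf_def by (subst measure_distr) (auto simp: U_def)
      moreover have "cdf (distr M borel X) x = measure M {\<omega> \<in> space M. X \<omega> \<le> x}"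
        unfolding cdf_def by (subst measure_distr) (auto simp: vimage_def Int_def conj_commute)
      ultimately show "cdf (distr M borel X) x = cdf (distr U borel Q) x"
        using cdf by simp
    qed
  qed
  moreover have "has_bochner_integral U (\<lambda>v. f (Q v)) I"
    unfolding U_density by (rule has_bochner_integral_density) (use integral in auto)
  ultimately have "has_bochner_integral (distr M borel X) f I"
    by (metis has_bochner_integral_distr measurable_cong_sets U_sets Q_measurable f_measurable)
  then show ?thesis
    by (simp add: has_bochner_integral_iff integrable_distr_eq integral_distr)
qed

lemma sums_neg_ln_one_minus:
  fixes w :: real assumes "\<bar>w\<bar> < 1"
  shows "(\<lambda>n. w ^ n / real n) sums (- ln (1 - w))"
  using sums_minus[OF ln_series'[of "-w"]] assms by simp

lemma summable_power_mult_div: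
  fixes c b :: real assumes "\<bar>c\<bar> \<le> 1" "b > 0"
  shows "summable (\<lambda>n. c ^ n * b / (real n * (real n + b)))"
proof (rule summable_comparison_test')
  show "summable (\<lambda>n. b * inverse (real n ^ 2))"
    by (intro summable_mult inverse_power_summable) auto
  fix n :: nat assume "n \<ge> 1"
  have "\<bar>c\<bar> ^ n * b / (real n * (real n + b)) \<le> 1 * b / (real n * real n)"
    using assms \<open>n \<ge> 1\<close> by (intro frac_le mult_right_mono mult_left_mono power_le_one) auto
  then show "norm (c ^ n * b / (real n * (real n + b))) \<le> b * inverse (real n ^ 2)"
    using assms by (simp add: abs_mult power_abs power2_eq_square field_simps)
qed

lemma nn_integral_powr_unit_interval:
  fixes a :: real assumes "a > -1"
  shows "(\<integral>\<^sup>+ v. ennreal (indicator {0<..<1} v * v powr a) \<partial>lborel) = ennreal (1 / (a + 1))"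
proof (rule nn_integral_has_integral_lborel)
  have "((\<lambda>v. v powr a) has_integral (1 / (a + 1))) {0..1}"
    using has_integral_powr_from_0[of a 1] assms by simp
  then have "((\<lambda>v. v powr a) has_integral (1 / (a + 1))) {0<..<1}"
    by (metis has_integral_Icc_iff_Ioo)
  then have "((\<lambda>v. if v \<in> {0<..<1} then v powr a else 0) has_integral (1 / (a + 1))) UNIV"
    by (subst has_integral_restrict_UNIV)
  then show "((\<lambda>v. indicator {0<..<1} v * v powr a) has_integral (1 / (a + 1))) UNIV"
    by (rule has_integral_eq[rotated]) (simp add: indicator_def)
qed (auto simp: indicator_def)

lemma mult_powr_less_one:
  fixes c v p :: real assumes "0 \<le> c" "c \<le> 1" "v \<in> {0<..<1}" "p > 0"
  shows "c * v powr p < 1"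
proof -
  have "c * v powr p \<le> v powr p"
    using assms by (intro mult_left_le_one_le) auto
  also have "\<dots> < 1"
    using assms by (simp add: powr01_less_one)
  finally show ?thesis .
qed

lemma nn_integral_neg_ln_one_minus_powr:
  fixes c b :: real assumes c: "0 \<le> c" "c \<le> 1" and b: "b > 0"
  shows "(\<integral>\<^sup>+ v. ennreal (indicator {0<..<1} v * - ln (1 - c * v powr (1/b))) \<partial>lborel)
     = ennreal (\<Sum>n. c ^ n * b / (real n * (real n + b)))"
proof -
  define t where "t n v = c ^ n / real n * (indicator {0<..<1} v * v powr (real n / b))" for n v
  have t_nonneg: "t n v \<ge> 0" for n v
    using c by (simp add: t_def)
  have expand: "ennreal (indicator {0<..<1} v * - ln (1 - c * v powr (1/b))) = (\<Sum>n. ennreal (t n v))" for v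
  proof (cases "v \<in> {0<..<1}")
    case True
    have w: "0 \<le> c * v powr (1/b)" "c * v powr (1/b) < 1"
      using True b c mult_powr_less_one[of c v "1/b"] by auto
    then have "\<bar>c * v powr (1/b)\<bar> < 1" and "ln (1 - c * v powr (1/b)) \<le> 0"
      by auto
    from sums_neg_ln_one_minus[OF this(1)] have "(\<lambda>n. t n v) sums (- ln (1 - c * v powr (1/b)))"
      using True by (simp add: t_def power_mult_distrib powr_power)
    then show ?thesis
      using True t_nonneg \<open>ln (1 - c * v powr (1/b)) \<le> 0\<close>
      by (subst (asm) sums_ennreal[symmetric]) (auto simp: sums_iff)
  qed (simp add: t_def)
  have "(\<integral>\<^sup>+ v. ennreal (indicator {0<..<1} v * - ln (1 - c * v powr (1/b))) \<partial>lborel)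
      = (\<Sum>n. \<integral>\<^sup>+ v. ennreal (t n v) \<partial>lborel)"
    unfolding expand t_def by (rule nn_integral_suminf) measurable
  also have "\<dots> = (\<Sum>n. ennreal (c ^ n * b / (real n * (real n + b))))"
  proof (rule suminf_cong)
    fix n :: nat
    have "(\<integral>\<^sup>+ v. ennreal (t n v) \<partial>lborel)
        = ennreal (c ^ n / real n) * (\<integral>\<^sup>+ v. ennreal (indicator {0<..<1} v * v powr (real n / b)) \<partial>lborel)"
      unfolding t_def using c
      by (subst nn_integral_cmult[symmetric]) (auto intro!: nn_integral_cong simp: ennreal_mult[symmetric])
    also have "\<dots> = ennreal (c ^ n / real n) * ennreal (1 / (real n / b + 1))"
      using b by (subst nn_integral_powr_unit_interval) (auto intro: less_le_trans[of _ 0])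
    also have "\<dots> = ennreal (c ^ n / real n * (1 / (real n / b + 1)))"
      using b c by (subst ennreal_mult) (auto intro: add_nonneg_nonneg)
    also have "c ^ n / real n * (1 / (real n / b + 1)) = c ^ n * b / (real n * (real n + b))"
      using b by (cases "n = 0") (auto simp: field_simps)
    finally show "(\<integral>\<^sup>+ v. ennreal (t n v) \<partial>lborel) = ennreal (c ^ n * b / (real n * (real n + b)))" .
  qed
  also have "\<dots> = ennreal (\<Sum>n. c ^ n * b / (real n * (real n + b)))"
    using c b by (intro suminf_ennreal2 summable_power_mult_div) auto
  finally show ?thesis .
qed

lemma has_bochner_integral_neg_ln_one_minus_powr:
  fixes c b :: real assumes c: "0 \<le> c" "c \<le> 1" and b: "b > 0"
  shows "has_bochner_integral lborel (\<lambda>v. indicator {0<..<1} v * - ln (1 - c * v powr (1/b)))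
     (\<Sum>n. c ^ n * b / (real n * (real n + b)))"
proof (rule has_bochner_integral_nn_integral)
  have "0 \<le> indicator {0<..<1} v * - ln (1 - c * v powr (1/b))" for v :: real
  proof (cases "v \<in> {0<..<1}")
    case True
    then have "c * v powr (1/b) < 1"
      using b c by (intro mult_powr_less_one) auto
    then show ?thesis
      using True c by simp
  qed simp
  then show "AE v in lborel. 0 \<le> indicator {0<..<1} v * - ln (1 - c * v powr (1/b))"
    by simp
  show "0 \<le> (\<Sum>n. c ^ n * b / (real n * (real n + b)))"
    using c b by (intro suminf_nonneg summable_power_mult_div) auto
  show "(\<integral>\<^sup>+ v. ennreal (indicator {0<..<1} v * - ln (1 - c * v powr (1/b))) \<partial>lborel)
      = ennreal (\<Sum>n. c ^ n * b / (real n * (real n + b)))"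
    by (rule nn_integral_neg_ln_one_minus_powr[OF c b])
qed measurable

lemma suminf_div_mult_eq_Digamma:
  fixes b :: real assumes b: "b > 0"
  shows "(\<Sum>n. b / (real n * (real n + b))) = Digamma (1 + b) + euler_mascheroni"
proof -
  have "summable (\<lambda>n. b / (real n * (real n + b)))"
    using summable_power_mult_div[of 1 b] b by simp
  from suminf_split_head[OF this]
  have "(\<Sum>n. b / (real n * (real n + b))) = (\<Sum>n. b / (real (Suc n) * (real (Suc n) + b)))"
    by simp
  also have "\<dots> = (\<Sum>n. inverse (of_nat (Suc n)) - inverse ((1 + b) + of_nat n))"
    using b by (intro suminf_cong) (auto simp: field_simps)
  also have "\<dots> = Digamma (1 + b) + euler_mascheroni"
    by (simp add: Digamma_def)
  finally show ?thesis .
qed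

text \<open>The \<open>n = 0\<close> term of the left-hand series is \<open>0\<close> (division by zero), whereas the Lerch
  series starts with \<open>1 / b\<close>; hence the correction \<open>1 / b\<close>.\<close>

lemma suminf_power_mult_div_eq_lerch_phi:
  fixes z b :: real assumes z: "\<bar>z\<bar> < 1" and b: "b > 0"
  shows "(\<Sum>n. z ^ n * b / (real n * (real n + b))) = - ln (1 - z) - lerch_phi z 1 b + 1 / b"
proof -
  have "summable (\<lambda>n. z ^ n / (real n + b))"
  proof (rule summable_comparison_test')
    show "summable (\<lambda>n. \<bar>z\<bar> ^ n * (1 / b))"
      using z by (intro summable_mult2 summable_geometric) auto
    show "norm (z ^ n / (real n + b)) \<le> \<bar>z\<bar> ^ n * (1 / b)" for n
      using b by (auto simp: power_abs abs_mult intro!: divide_left_mono mult_pos_pos)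
  qed
  then have "(\<lambda>n. z ^ n / (real n + b)) sums lerch_phi z 1 b"
    using b unfolding lerch_phi_def by (simp add: summable_sums)
  moreover have "(\<lambda>n. if n = 0 then 1 / b else 0) sums (1 / b)"
    using sums_single[of 0 "\<lambda>_. 1 / b"] by simp
  ultimately have "(\<lambda>n. z ^ n / real n - z ^ n / (real n + b) + (if n = 0 then 1 / b else 0))
      sums (- ln (1 - z) - lerch_phi z 1 b + 1 / b)"
    by (intro sums_add sums_diff sums_neg_ln_one_minus z)
  moreover have "z ^ n / real n - z ^ n / (real n + b) + (if n = 0 then 1 / b else 0)
      = z ^ n * b / (real n * (real n + b))" for n
    using b by (cases "n = 0") (auto simp: diff_frac_eq algebra_simps)
  ultimately show ?thesis
    by (simp add: sums_iff)
qed

lemma has_bochner_integral_ln_unit_interval: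
  "has_bochner_integral lborel (\<lambda>v::real. indicator {0<..<1} v * ln v) (-1)"
proof -
  \<comment> \<open>the case \<open>c = b = 1\<close> of the series integral, reflected by \<open>v \<mapsto> 1 - v\<close>\<close>
  have sum: "(\<Sum>n. 1 / (real n * (real n + 1))) = (1::real)"
    using suminf_div_mult_eq_Digamma[of 1] by (simp add: Digamma_numeral harm_def)
  from has_bochner_integral_neg_ln_one_minus_powr[of 1 1, unfolded power_one mult_1 sum]
  have "has_bochner_integral lborel (\<lambda>v::real. indicator {0<..<1} v * - ln (1 - v)) 1"
    by (rule has_bochner_integral_cong[THEN iffD1, OF refl _ refl, rotated]) (auto simp: indicator_def)
  then have "has_bochner_integral lborel (\<lambda>v::real. indicator {0<..<1} (1 - v) * - ln (1 - (1 - v))) 1"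
    using lborel_has_bochner_integral_real_affine_iff[of "-1" "\<lambda>v. indicator {0<..<1} v * - ln (1 - v)" 1 1]
    by simp
  then have "has_bochner_integral lborel (\<lambda>v::real. - (indicator {0<..<1} v * ln v)) 1"
    by (rule has_bochner_integral_cong[THEN iffD1, OF refl _ refl, rotated]) (auto simp: indicator_def)
  then show ?thesis
    using has_bochner_integral_minus by fastforce
qed

definition ecr_quantile :: "real \<Rightarrow> real \<Rightarrow> real \<Rightarrow> real" where
  "ecr_quantile \<beta> l v = l * sqrt (v powr (1/\<beta>) * (2 - v powr (1/\<beta>))) / (1 - v powr (1/\<beta>))"

lemma ecr_quantile_measurable [measurable]: "ecr_quantile \<beta> l \<in> borel_measurable borel"
  unfolding ecr_quantile_def by measurable

lemma ecr_quantile_pos: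
  assumes "\<beta> > 0" "l > 0" "v \<in> {0<..<1}"
  shows "ecr_quantile \<beta> l v > 0"
  using assms mult_powr_less_one[of 1 v "1/\<beta>"]
  by (auto simp: ecr_quantile_def intro!: divide_pos_pos mult_pos_pos)

lemma ecr_quantile_le_iff:
  assumes b: "\<beta> > 0" and l: "l > 0" and v: "v \<in> {0<..<1}" and x: "x > 0"
  shows "ecr_quantile \<beta> l v \<le> x \<longleftrightarrow> v \<le> ecr_cdf \<beta> l x"
proof -
  define w where "w = v powr (1/\<beta>)"
  have w: "0 < w" "w < 1"
    using v b mult_powr_less_one[of 1 v "1/\<beta>"] by (auto simp: w_def)
  define s where "s = sqrt (l\<^sup>2 + x\<^sup>2)"
  have s: "s > l" "s\<^sup>2 = l\<^sup>2 + x\<^sup>2"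
    using l x by (auto simp: s_def real_less_rsqrt)
  have "ecr_quantile \<beta> l v \<le> x \<longleftrightarrow> l * sqrt (w * (2 - w)) \<le> x * (1 - w)"
    unfolding ecr_quantile_def w_def[symmetric] using w by (simp add: divide_le_eq)
  also have "\<dots> \<longleftrightarrow> (l * sqrt (w * (2 - w)))\<^sup>2 \<le> (x * (1 - w))\<^sup>2"
    using w l x by (simp add: power_mono_iff)
  also have "\<dots> \<longleftrightarrow> l\<^sup>2 \<le> s\<^sup>2 * (1 - w)\<^sup>2"
    unfolding s(2) using w by (simp add: power_mult_distrib power2_eq_square algebra_simps)
  also have "\<dots> \<longleftrightarrow> l \<le> s * (1 - w)"
    using w l s(1) power_mono_iff[of l "s * (1 - w)" 2] by (simp add: power_mult_distrib)
  also have "\<dots> \<longleftrightarrow> w \<le> 1 - l / s"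
    using l s by (simp add: field_simps)
  also have "\<dots> \<longleftrightarrow> w powr \<beta> \<le> (1 - l / s) powr \<beta>"
    using w b s l by (meson not_le powr_less_mono2 powr_mono2 less_imp_le divide_less_eq_1_pos
        diff_ge_0_iff_ge less_trans)
  also have "w powr \<beta> = v"
    using v b by (simp add: w_def powr_powr)
  finally show ?thesis
    unfolding ecr_cdf_def s_def .
qed

lemma measure_ecr_quantile_le:
  assumes b: "\<beta> > 0" and l: "l > 0"
  shows "measure lborel ({0<..<1} \<inter> ecr_quantile \<beta> l -` {..x}) = (if x > 0 then ecr_cdf \<beta> l x else 0)"
proof (cases "x > 0")
  case True
  define g where "g = 1 - l / sqrt (l\<^sup>2 + x\<^sup>2)"
  have "l < sqrt (l\<^sup>2 + x\<^sup>2)"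
    using l True by (simp add: real_less_rsqrt)
  moreover have "0 < sqrt (l\<^sup>2 + x\<^sup>2)"
    using l by (simp add: add_pos_nonneg)
  ultimately have "0 < g" "g < 1"
    using l by (simp_all add: g_def)
  then have F: "0 < ecr_cdf \<beta> l x" "ecr_cdf \<beta> l x < 1"
    unfolding ecr_cdf_def g_def[symmetric] using b by (auto simp: powr01_less_one)
  have "{0<..<1} \<inter> ecr_quantile \<beta> l -` {..x} = {0<..ecr_cdf \<beta> l x}"
    using ecr_quantile_le_iff[OF b l _ True] F by auto
  then show ?thesis
    using True F by simp
next
  case False
  then have "{0<..<1} \<inter> ecr_quantile \<beta> l -` {..x} = {}"
    using ecr_quantile_pos[OF b l] by force
  then show ?thesis
    using False by simp
qed

lemma ln_ecr_quantile:
  assumes b: "\<beta> > 0" and l: "l > 0" and v: "v \<in> {0<..<1}"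
  shows "ln (ecr_quantile \<beta> l v) = ln l + ln v / (2 * \<beta>) + ln 2 / 2
     + ln (1 - v powr (1/\<beta>) / 2) / 2 - ln (1 - v powr (1/\<beta>))"
proof -
  define w where "w = v powr (1/\<beta>)"
  have w: "0 < w" "w < 1"
    using v b mult_powr_less_one[of 1 v "1/\<beta>"] by (auto simp: w_def)
  have "ln (ecr_quantile \<beta> l v) = ln l + (ln w + ln (2 - w)) / 2 - ln (1 - w)"
    unfolding ecr_quantile_def w_def[symmetric] using w l by (simp add: ln_div ln_mult ln_sqrt)
  also have "ln w = 1 / \<beta> * ln v"
    using v by (simp add: w_def ln_powr)
  also have "ln (2 - w) = ln 2 + ln (1 - w / 2)"
    using w ln_mult[of 2 "1 - w / 2"] by (simp add: algebra_simps)
  finally show ?thesis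
    unfolding w_def using b by (simp add: field_simps)
qed

lemma has_bochner_integral_ln_ecr_quantile:
  assumes b: "\<beta> > 0" and l: "l > 0"
  shows "has_bochner_integral lborel (\<lambda>v. indicator {0<..<1} v * ln (ecr_quantile \<beta> l v))
    (ln l + lerch_phi (1/2) 1 \<beta> / 2 + Digamma (1 + \<beta>) + euler_mascheroni - 1 / \<beta>)"
proof -
  let ?I = "indicator {0<..<1::real} :: real \<Rightarrow> real"
  have decomposed: "has_bochner_integral lborel
      (\<lambda>v. ln l * ?I v + 1 / (2 * \<beta>) * (?I v * ln v) + ln 2 / 2 * ?I v
         - 1/2 * (?I v * - ln (1 - 1/2 * v powr (1/\<beta>))) + ?I v * - ln (1 - v powr (1/\<beta>)))
      (ln l * 1 + 1 / (2 * \<beta>) * -1 + ln 2 / 2 * 1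
         - 1/2 * (\<Sum>n. (1/2) ^ n * \<beta> / (real n * (real n + \<beta>)))
         + (\<Sum>n. \<beta> / (real n * (real n + \<beta>))))"
    using b has_bochner_integral_real_indicator[of "{0<..<1::real}" lborel]
    by (intro has_bochner_integral_add has_bochner_integral_diff has_bochner_integral_mult_right
        has_bochner_integral_ln_unit_interval has_bochner_integral_neg_ln_one_minus_powr
        has_bochner_integral_neg_ln_one_minus_powr[of 1, unfolded power_one mult_1]) auto
  have total: "ln l * 1 + 1 / (2 * \<beta>) * -1 + ln 2 / 2 * 1
         - 1/2 * (\<Sum>n. (1/2) ^ n * \<beta> / (real n * (real n + \<beta>)))
         + (\<Sum>n. \<beta> / (real n * (real n + \<beta>)))
      = ln l + lerch_phi (1/2) 1 \<beta> / 2 + Digamma (1 + \<beta>) + euler_mascheroni - 1 / \<beta>"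
  proof -
    have half: "(\<Sum>n. (1/2) ^ n * \<beta> / (real n * (real n + \<beta>))) = ln 2 - lerch_phi (1/2) 1 \<beta> + 1 / \<beta>"
      using b suminf_power_mult_div_eq_lerch_phi[of "1/2" \<beta>] by (simp add: ln_div)
    show ?thesis
      unfolding half suminf_div_mult_eq_Digamma[OF b] using b by (simp add: field_simps)
  qed
  show ?thesis
    by (rule has_bochner_integral_cong[THEN iffD1, OF refl _ total decomposed])
       (auto simp: indicator_def ln_ecr_quantile[OF b l] algebra_simps)
qed

theorem proposition6:
  fixes M :: "'a measure" and X :: "'a \<Rightarrow> real" and \<beta> l :: real
  assumes "prob_space M"
    and "X \<in> borel_measurable M"
    and "\<beta> > 0" and "l > 0"
    and "\<And>x. measure M {\<omega> \<in> space M. X \<omega> \<le> x} = (if x > 0 then ecr_cdf \<beta> l x else 0)"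
  shows "integrable M (\<lambda>\<omega>. ln (X \<omega>))
    \<and> (\<integral>\<omega>. ln (X \<omega>) \<partial>M) = ln l + lerch_phi (1/2) 1 \<beta> / 2 + Digamma (1 + \<beta>) + euler_mascheroni - 1 / \<beta>"
proof -
  have "measure M {\<omega> \<in> space M. X \<omega> \<le> x} = measure lborel ({0<..<1} \<inter> ecr_quantile \<beta> l -` {..x})"
    for x
    using assms by (simp add: measure_ecr_quantile_le)
  from has_bochner_integral_quantile_transform[OF assms(1,2) _ _ this
      has_bochner_integral_ln_ecr_quantile[OF assms(3,4)]]
  have "has_bochner_integral M (\<lambda>\<omega>. ln (X \<omega>))
      (ln l + lerch_phi (1/2) 1 \<beta> / 2 + Digamma (1 + \<beta>) + euler_mascheroni - 1 / \<beta>)"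
    by measurable
  then show ?thesis
    by (simp add: has_bochner_integral_iff)
qed

end
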